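(* Assume $\gamma_0$ is unimodal (and symmetric about $0$) with $\sup_u|\frac{d}{du}\log\gamma_0(u)|\le\Lambda$ a.e. for some $\Lambda>0$. Then there is a constant $C>0$ depending only on $\gamma_0$ such that for all $x\in\mathbb{R}$, $w\in(0,1]$ and $c\in\mathbb{R}$, $$|\zeta(x;\theta)-x|\le C\bigl(1+\sqrt{|c|+\log(1/w)}\bigr).$$
   Context: Let $\phi$ be the standard normal density and $\gamma_0$ a probability density on $\mathbb{R}$. For $\theta=(w,c)$, $w\in(0,1]$, $c\in\mathbb{R}$, let $g(x;c)=\int\phi(x-\mu)\gamma_0(\mu-c)\,d\mu$, $m(x;\theta)=(1-w)\phi(x)+wg(x;c)$, and $\zeta(x;\theta)=x+\frac{d}{dx}\log m(x;\theta)$ (the posterior mean of $\mu$ given $X=x$ under $X\mid\mu\sim N(\mu,1)$ and prior $(1-w)\delta_0+w\gamma_0(\cdot-c)$). *)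

theory Defs
  imports "HOL-Probability.Probability"
begin

definition gconv :: "(real \<Rightarrow> real) \<Rightarrow> real \<Rightarrow> real \<Rightarrow> real" where
  "gconv \<gamma>0 c x = (LINT \<mu>|lborel. std_normal_density (x - \<mu>) * \<gamma>0 (\<mu> - c))"

definition marg :: "(real \<Rightarrow> real) \<Rightarrow> real \<Rightarrow> real \<Rightarrow> real \<Rightarrow> real" where
  "marg \<gamma>0 w c x = (1 - w) * std_normal_density x + w * gconv \<gamma>0 c x"

definition zeta :: "(real \<Rightarrow> real) \<Rightarrow> real \<Rightarrow> real \<Rightarrow> real \<Rightarrow> real" where
  "zeta \<gamma>0 w c x = x + deriv (\<lambda>y. ln (marg \<gamma>0 w c y)) x"

end

theory Submission
  imports Defs
begin

text \<open>
  The score \<open>\<zeta>(x) - x = m'(x) / m(x)\<close> splits into a null part, coming from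
  \<open>(1 - w) \<phi>\<close>, and a signal part, coming from \<open>w g\<close>.
  Since \<open>\<gamma>\<^sub>0\<close> is log-Lipschitz, \<open>\<gamma>\<^sub>0(\<mu> - c)\<close> is within a factor
  \<open>e\<^bsup>\<plusminus>\<Lambda>|x - \<mu>|\<^esup>\<close> of \<open>\<gamma>\<^sub>0(x - c)\<close>, and the Gaussian kernel absorbs this factor;
  hence both \<open>g(x)\<close> and \<open>|g'(x)|\<close> are comparable to \<open>\<gamma>\<^sub>0(x - c)\<close> and the signal part
  is bounded by a constant.  The null part is at most \<open>|x|\<close>, which is good enough while
  \<open>x\<^sup>2 \<le> 4 (log(1/w) + \<Lambda>|c| + \<Lambda>|x|)\<close>; beyond that threshold
  \<open>|x| \<phi>(x) \<le> e\<^bsup>-x\<^sup>2/4\<^esup>\<close> is dominated by \<open>w g(x) \<ge> w \<gamma>\<^sub>0(0) e\<^bsup>-\<Lambda>(|x| + |c|)\<^esup>\<close>.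
\<close>

lemma std_normal_density_has_real_derivative:
  "(std_normal_density has_real_derivative - y * std_normal_density y) (at y)"
  unfolding std_normal_density_def[abs_def]
  by (auto intro!: derivative_eq_intros simp: field_simps simp flip: real_sqrt_mult)

lemma std_normal_density_le_exp: "std_normal_density t \<le> exp (- t\<^sup>2 / 2)"
proof -
  have "1 \<le> sqrt (2 * pi)"
    using pi_gt3 by simp
  then show ?thesis
    by (simp add: std_normal_density_def divide_le_eq)
qed

lemma std_normal_density_le_1: "std_normal_density t \<le> 1"
  using std_normal_density_le_exp[of t] by (simp add: order_trans)

lemma abs_le_exp_square_div_4: "\<bar>t :: real\<bar> \<le> exp (t\<^sup>2 / 4)"
proof -
  have "\<bar>t\<bar> \<le> 1 + t\<^sup>2 / 4"
    using zero_le_power2[of "\<bar>t\<bar> / 2 - 1"] by (simp add: power2_eq_square algebra_simps)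
  also have "\<dots> \<le> exp (t\<^sup>2 / 4)"
    by (rule exp_ge_add_one_self)
  finally show ?thesis .
qed

lemma abs_mult_std_normal_density_le: "\<bar>t\<bar> * std_normal_density t \<le> exp (- t\<^sup>2 / 4)"
proof -
  have "\<bar>t\<bar> * std_normal_density t \<le> exp (t\<^sup>2 / 4) * exp (- t\<^sup>2 / 2)"
    by (intro mult_mono abs_le_exp_square_div_4 std_normal_density_le_exp) auto
  also have "\<dots> = exp (- t\<^sup>2 / 4)"
    by (simp flip: exp_add)
  finally show ?thesis .
qed

lemma std_normal_density_lipschitz:
  "\<bar>std_normal_density a - std_normal_density b\<bar> \<le> \<bar>a - b\<bar>"
proof -
  have "norm (std_normal_density a - std_normal_density b) \<le> 1 * norm (a - b)"
  proof (rule field_differentiable_bound[of UNIV])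
    fix t :: real
    show "(std_normal_density has_field_derivative - t * std_normal_density t) (at t within UNIV)"
      by (rule std_normal_density_has_real_derivative)
    show "norm (- t * std_normal_density t) \<le> 1"
      using abs_mult_std_normal_density_le[of t] by (simp add: abs_mult order_trans)
  qed auto
  then show ?thesis
    by simp
qed

lemma normal_density_zero_diff: "normal_density 0 \<sigma> (x - \<mu>) = normal_density x \<sigma> \<mu>"
  by (simp add: normal_density_def power2_commute)

lemma normal_density_sqrt_half: "normal_density 0 (1 / sqrt 2) t = exp (- t\<^sup>2) / sqrt pi"
  by (simp add: normal_density_def power_divide)

lemma normal_density_2: "normal_density 0 2 t = exp (- t\<^sup>2 / 8) / sqrt (8 * pi)"
  by (simp add: normal_density_def mult.commute)

lemma std_normal_density_mult_exp_ge:
  "exp (- \<Lambda>\<^sup>2 / 2) / sqrt 2 * normal_density 0 (1 / sqrt 2) t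
     \<le> std_normal_density t * exp (- (\<Lambda> * \<bar>t\<bar>))"
proof -
  have "\<Lambda> * \<bar>t\<bar> \<le> \<Lambda>\<^sup>2 / 2 + t\<^sup>2 / 2"
    using zero_le_power2[of "\<bar>t\<bar> - \<Lambda>"] by (simp add: power2_eq_square algebra_simps)
  then have "exp (- \<Lambda>\<^sup>2 / 2 - t\<^sup>2) \<le> exp (- t\<^sup>2 / 2 - \<Lambda> * \<bar>t\<bar>)"
    by simp
  then have "exp (- \<Lambda>\<^sup>2 / 2) * exp (- t\<^sup>2) / sqrt (2 * pi) \<le> exp (- t\<^sup>2 / 2) * exp (- (\<Lambda> * \<bar>t\<bar>)) / sqrt (2 * pi)"
    by (simp add: divide_right_mono flip: exp_add)
  then show ?thesis
    by (simp add: normal_density_sqrt_half std_normal_density_def real_sqrt_mult)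
qed

lemma abs_mult_std_normal_density_mult_exp_le:
  "\<bar>t\<bar> * std_normal_density t * exp (\<Lambda> * \<bar>t\<bar>) \<le> sqrt (8 * pi) * exp (2 * \<Lambda>\<^sup>2) * normal_density 0 2 t"
proof -
  have "\<Lambda> * \<bar>t\<bar> \<le> 2 * \<Lambda>\<^sup>2 + t\<^sup>2 / 8"
    using zero_le_power2[of "\<bar>t\<bar> / 4 - \<Lambda>"] by (simp add: power2_eq_square algebra_simps)
  then have exponent: "exp (- t\<^sup>2 / 4 + \<Lambda> * \<bar>t\<bar>) \<le> exp (2 * \<Lambda>\<^sup>2 - t\<^sup>2 / 8)"
    by simp
  have "\<bar>t\<bar> * std_normal_density t * exp (\<Lambda> * \<bar>t\<bar>) \<le> exp (- t\<^sup>2 / 4) * exp (\<Lambda> * \<bar>t\<bar>)"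
    by (intro mult_right_mono abs_mult_std_normal_density_le) simp
  also have "\<dots> \<le> exp (2 * \<Lambda>\<^sup>2) * exp (- t\<^sup>2 / 8)"
    using exponent by (simp flip: exp_add exp_diff)
  also have "\<dots> = sqrt (8 * pi) * exp (2 * \<Lambda>\<^sup>2) * normal_density 0 2 t"
    by (simp add: normal_density_2)
  finally show ?thesis .
qed

lemma has_real_derivative_integral_lipschitz:
  fixes f :: "real \<Rightarrow> 'a \<Rightarrow> real"
  assumes integrable: "\<And>y. integrable M (f y)"
    and deriv: "\<And>t. t \<in> space M \<Longrightarrow> ((\<lambda>y. f y t) has_real_derivative f' t) (at x)"
    and f'_measurable: "f' \<in> borel_measurable M"
    and lipschitz: "\<And>y t. t \<in> space M \<Longrightarrow> \<bar>f y t - f x t\<bar> \<le> \<bar>y - x\<bar> * w t"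
    and w: "integrable M w"
  shows "((\<lambda>y. integral\<^sup>L M (f y)) has_real_derivative integral\<^sup>L M f') (at x)"
  unfolding has_field_derivative_iff
proof (rule LIMSEQ_SEQ_conv[THEN iffD1], intro allI impI)
  fix S :: "nat \<Rightarrow> real"
  assume S: "(\<forall>n. S n \<noteq> x) \<and> S \<longlonglongrightarrow> x"
  define q where "q n t = (f (S n) t - f x t) / (S n - x)" for n t
  have "(\<lambda>n. integral\<^sup>L M (q n)) \<longlonglongrightarrow> integral\<^sup>L M f'"
  proof (rule integral_dominated_convergence[where w = w])
    show "q n \<in> borel_measurable M" for n
      unfolding q_def using integrable by measurable
    show "AE t in M. (\<lambda>n. q n t) \<longlonglongrightarrow> f' t"
    proof (rule AE_I2)
      fix t assume "t \<in> space M"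
      then have "((\<lambda>y. (f y t - f x t) / (y - x)) \<longlongrightarrow> f' t) (at x)"
        using deriv by (simp add: has_field_derivative_iff)
      then show "(\<lambda>n. q n t) \<longlonglongrightarrow> f' t"
        using S unfolding q_def by (simp add: LIMSEQ_SEQ_conv[symmetric])
    qed
    show "AE t in M. norm (q n t) \<le> w t" for n
      using lipschitz S by (intro AE_I2) (simp add: q_def abs_divide divide_le_eq mult.commute)
  qed (use f'_measurable w in auto)
  moreover have "integral\<^sup>L M (q n) = (integral\<^sup>L M (f (S n)) - integral\<^sup>L M (f x)) / (S n - x)" for n
    unfolding q_def using integrable by simp
  ultimately show "(\<lambda>n. (integral\<^sup>L M (f (S n)) - integral\<^sup>L M (f x)) / (S n - x)) \<longlonglongrightarrow> integral\<^sup>L M f'"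
    by simp
qed

lemma integrable_shift:
  fixes f :: "real \<Rightarrow> real"
  assumes "integrable lborel f"
  shows "integrable lborel (\<lambda>\<mu>. f (\<mu> - c))"
  using assms lborel_integrable_real_affine_iff[of 1 f "- c"] by simp

lemma integrable_std_normal_density_mult:
  fixes h :: "real \<Rightarrow> real"
  assumes "integrable lborel h"
  shows "integrable lborel (\<lambda>\<mu>. std_normal_density (x - \<mu>) * h \<mu>)"
proof (rule Bochner_Integration.integrable_bound[OF assms])
  show "(\<lambda>\<mu>. std_normal_density (x - \<mu>) * h \<mu>) \<in> borel_measurable lborel"
    using assms by measurable
  show "AE \<mu> in lborel. norm (std_normal_density (x - \<mu>) * h \<mu>) \<le> norm (h \<mu>)"
    using std_normal_density_le_1 by (intro AE_I2) (simp add: abs_mult mult_left_le_one_le)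
qed

lemma gconv_has_real_derivative:
  assumes "integrable lborel \<gamma>"
  shows "(gconv \<gamma> c has_real_derivative
           (LINT \<mu>|lborel. - (x - \<mu>) * std_normal_density (x - \<mu>) * \<gamma> (\<mu> - c))) (at x)"
proof -
  note shifted = integrable_shift[OF assms, of c]
  show ?thesis
    unfolding gconv_def[abs_def]
  proof (rule has_real_derivative_integral_lipschitz[where w = "\<lambda>\<mu>. \<bar>\<gamma> (\<mu> - c)\<bar>"])
    show "integrable lborel (\<lambda>\<mu>. std_normal_density (y - \<mu>) * \<gamma> (\<mu> - c))" for y
      by (rule integrable_std_normal_density_mult[OF shifted])
    show "((\<lambda>y. std_normal_density (y - \<mu>) * \<gamma> (\<mu> - c)) has_real_derivative
            - (x - \<mu>) * std_normal_density (x - \<mu>) * \<gamma> (\<mu> - c)) (at x)" for \<mu>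
      by (auto intro!: derivative_eq_intros DERIV_chain2[OF std_normal_density_has_real_derivative])
    show "\<bar>std_normal_density (y - \<mu>) * \<gamma> (\<mu> - c) - std_normal_density (x - \<mu>) * \<gamma> (\<mu> - c)\<bar>
            \<le> \<bar>y - x\<bar> * \<bar>\<gamma> (\<mu> - c)\<bar>" for y \<mu>
      using std_normal_density_lipschitz[of "y - \<mu>" "x - \<mu>"]
      by (simp add: abs_mult mult_right_mono flip: left_diff_distrib)
    show "(\<lambda>\<mu>. - (x - \<mu>) * std_normal_density (x - \<mu>) * \<gamma> (\<mu> - c)) \<in> borel_measurable lborel"
      using borel_measurable_integrable[OF shifted] by measurable
  qed (use shifted in auto)
qed

lemma zeta_minus_self_eq:
  assumes "integrable lborel \<gamma>" and "0 < w" "w \<le> 1" and "0 < gconv \<gamma> c x"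
  shows "zeta \<gamma> w c x - x
           = ((1 - w) * (- x * std_normal_density x) + w * deriv (gconv \<gamma> c) x) / marg \<gamma> w c x"
proof -
  have "0 < marg \<gamma> w c x"
    using assms normal_density_pos[of 1 0 x]
    by (simp add: marg_def add_nonneg_pos)
  moreover have "(gconv \<gamma> c has_real_derivative deriv (gconv \<gamma> c) x) (at x)"
    using gconv_has_real_derivative[OF assms(1)] DERIV_imp_deriv by metis
  then have "(marg \<gamma> w c has_real_derivative
                (1 - w) * (- x * std_normal_density x) + w * deriv (gconv \<gamma> c) x) (at x)"
    unfolding marg_def[abs_def]
    by (auto intro!: derivative_eq_intros std_normal_density_has_real_derivative)
  ultimately have "((\<lambda>y. ln (marg \<gamma> w c y)) has_real_derivative
      ((1 - w) * (- x * std_normal_density x) + w * deriv (gconv \<gamma> c) x) / marg \<gamma> w c x) (at x)"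
    by (auto intro!: derivative_eq_intros)
  then show ?thesis
    unfolding zeta_def by (simp add: DERIV_imp_deriv)
qed

lemma abs_le_of_square_le:
  fixes x a \<Lambda> :: real
  assumes "0 \<le> a" and "0 \<le> \<Lambda>" and "x\<^sup>2 \<le> 4 * (a + \<Lambda> * \<bar>x\<bar>)"
  shows "\<bar>x\<bar> \<le> 4 * \<Lambda> + 2 * sqrt a"
proof (rule ccontr)
  assume "\<not> ?thesis"
  then have gap: "2 * sqrt a < \<bar>x\<bar> - 4 * \<Lambda>"
    by simp
  then have "4 * a < (\<bar>x\<bar> - 4 * \<Lambda>)\<^sup>2"
    using power_strict_mono[OF gap, of 2] assms(1) by (simp add: power_mult_distrib)
  also have "\<dots> \<le> \<bar>x\<bar> * (\<bar>x\<bar> - 4 * \<Lambda>)"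
  proof -
    have "0 \<le> sqrt a"
      using assms(1) by simp
    then have "0 \<le> \<bar>x\<bar> - 4 * \<Lambda>"
      using gap by linarith
    then show ?thesis
      unfolding power2_eq_square using assms(2) by (intro mult_right_mono) auto
  qed
  finally show False
    using assms(3) by (simp add: power2_eq_square algebra_simps)
qed

lemma mixture_null_term_le:
  fixes w p G x a K \<Lambda> :: real
  assumes w: "0 < w" "w \<le> 1" and p: "0 < p" "\<bar>x\<bar> * p \<le> exp (- x\<^sup>2 / 4)"
    and G: "0 < G" "K * exp (- (\<Lambda> * \<bar>x\<bar> + a)) \<le> G" and "0 < K" "0 \<le> a" "0 \<le> \<Lambda>"
  shows "(1 - w) * p * \<bar>x\<bar> / ((1 - w) * p + w * G) \<le> 4 * \<Lambda> + 2 * sqrt (ln (1 / w) + a) + 1 / K"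
proof -
  define L where "L = ln (1 / w)"
  define m where "m = (1 - w) * p + w * G"
  have "0 \<le> L"
    using w by (simp add: L_def)
  have "0 < w * G" and "0 \<le> (1 - w) * p"
    using w G p by auto
  then have "0 < m" and null_le: "(1 - w) * p \<le> m" and signal_le: "w * G \<le> m"
    by (auto simp: m_def)
  have "(1 - w) * p * \<bar>x\<bar> / m \<le> 4 * \<Lambda> + 2 * sqrt (L + a) + 1 / K"
  proof (cases "x\<^sup>2 \<le> 4 * ((L + a) + \<Lambda> * \<bar>x\<bar>)")
    case True
    have "(1 - w) * p * \<bar>x\<bar> \<le> m * \<bar>x\<bar>"
      using null_le by (rule mult_right_mono) simp
    then have "(1 - w) * p * \<bar>x\<bar> / m \<le> \<bar>x\<bar>"
      using \<open>0 < m\<close> by (simp add: pos_divide_le_eq mult.commute)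
    also have "\<dots> \<le> 4 * \<Lambda> + 2 * sqrt (L + a)"
      using True \<open>0 \<le> L\<close> \<open>0 \<le> a\<close> \<open>0 \<le> \<Lambda>\<close> by (intro abs_le_of_square_le) auto
    finally show ?thesis
      using \<open>0 < K\<close> by (simp add: add_increasing2)
  next
    case False
    have "(1 - w) * p * \<bar>x\<bar> \<le> \<bar>x\<bar> * p"
      using mult_right_mono[of "1 - w" 1 "\<bar>x\<bar> * p"] w p by (simp add: mult_ac)
    also have "\<dots> \<le> exp (- x\<^sup>2 / 4)"
      by (fact p(2))
    also have "\<dots> \<le> exp (- L) * exp (- (\<Lambda> * \<bar>x\<bar> + a))"
      using False by (simp flip: exp_add)
    also have "\<dots> = w * exp (- (\<Lambda> * \<bar>x\<bar> + a))"
      using w by (simp add: L_def ln_div)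
    also have "\<dots> \<le> w * G / K"
      using G w \<open>0 < K\<close> by (simp add: pos_le_divide_eq mult.commute mult_left_mono)
    finally have "(1 - w) * p * \<bar>x\<bar> / m \<le> (w * G / K) / m"
      using \<open>0 < m\<close> by (intro divide_right_mono) simp_all
    also have "\<dots> \<le> (w * G / K) / (w * G)"
      using signal_le \<open>0 < w * G\<close> \<open>0 < K\<close> by (intro divide_left_mono) auto
    also have "\<dots> = 1 / K"
      using w(1) G(1) by simp
    finally have "(1 - w) * p * \<bar>x\<bar> / m \<le> 1 / K" .
    moreover have "0 \<le> sqrt (L + a)"
      using \<open>0 \<le> L\<close> \<open>0 \<le> a\<close> by simp
    ultimately show ?thesis
      using \<open>0 \<le> \<Lambda>\<close> by linarith
  qed
  then show ?thesis
    by (simp add: L_def m_def)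
qed

lemma mixture_score_le:
  fixes w p G G' x a B K \<Lambda> :: real
  assumes w: "0 < w" "w \<le> 1" and p: "0 < p" "\<bar>x\<bar> * p \<le> exp (- x\<^sup>2 / 4)"
    and G: "0 < G" "K * exp (- (\<Lambda> * \<bar>x\<bar> + a)) \<le> G" and G': "\<bar>G'\<bar> \<le> B * G"
    and "0 < K" "0 \<le> a" "0 \<le> \<Lambda>"
  shows "\<bar>((1 - w) * (- x * p) + w * G') / ((1 - w) * p + w * G)\<bar>
           \<le> 4 * \<Lambda> + 2 * sqrt (ln (1 / w) + a) + 1 / K + B"
proof -
  define m where "m = (1 - w) * p + w * G"
  have "0 < w * G" "0 \<le> (1 - w) * p"
    using w G p by auto
  then have "0 < m" and signal_le: "w * G \<le> m"
    by (auto simp: m_def)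
  have "\<bar>((1 - w) * (- x * p) + w * G') / m\<bar> = \<bar>(1 - w) * (- x * p) + w * G'\<bar> / m"
    using \<open>0 < m\<close> by (simp add: abs_divide)
  also have "\<dots> \<le> (\<bar>(1 - w) * (- x * p)\<bar> + \<bar>w * G'\<bar>) / m"
    using \<open>0 < m\<close> by (intro divide_right_mono abs_triangle_ineq) simp
  also have "\<dots> = (1 - w) * p * \<bar>x\<bar> / m + w * \<bar>G'\<bar> / m"
    using w p by (simp add: abs_mult add_divide_distrib)
  also have "w * \<bar>G'\<bar> / m \<le> B"
  proof -
    have "w * \<bar>G'\<bar> \<le> B * (w * G)"
      using G' w by (simp add: mult_left_mono mult.left_commute)
    also have "\<dots> \<le> B * m"
    proof (rule mult_left_mono[OF signal_le])
      have "0 \<le> B * G"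
        using G' abs_ge_zero order_trans by blast
      then show "0 \<le> B"
        using G(1) by (simp add: zero_le_mult_iff)
    qed
    finally show ?thesis
      using \<open>0 < m\<close> by (simp add: pos_divide_le_eq)
  qed
  finally show ?thesis
    using mixture_null_term_le[OF w p G \<open>0 < K\<close> \<open>0 \<le> a\<close> \<open>0 \<le> \<Lambda>\<close>] by (simp add: m_def)
qed

locale log_lipschitz_density =
  fixes \<gamma> :: "real \<Rightarrow> real" and \<Lambda> :: real
  assumes pos: "\<And>u. 0 < \<gamma> u"
    and integrable: "integrable lborel \<gamma>"
    and log_lipschitz: "\<And>u v. \<bar>ln (\<gamma> u) - ln (\<gamma> v)\<bar> \<le> \<Lambda> * \<bar>u - v\<bar>"
begin

lemma lipschitz_constant_nonneg: "0 \<le> \<Lambda>"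
  using log_lipschitz[of 1 0] by simp

lemma le_mult_exp: "\<gamma> u \<le> \<gamma> v * exp (\<Lambda> * \<bar>u - v\<bar>)"
proof -
  have "ln (\<gamma> u) \<le> ln (\<gamma> v) + \<Lambda> * \<bar>u - v\<bar>"
    using log_lipschitz[of u v] by linarith
  then have "exp (ln (\<gamma> u)) \<le> exp (ln (\<gamma> v) + \<Lambda> * \<bar>u - v\<bar>)"
    by simp
  then show ?thesis
    using pos by (simp add: exp_add)
qed

lemma mult_exp_le: "\<gamma> v * exp (- (\<Lambda> * \<bar>u - v\<bar>)) \<le> \<gamma> u"
  using le_mult_exp[of v u] pos[of u] by (simp add: abs_minus_commute exp_minus field_simps)

lemma gconv_ge: "\<gamma> (x - c) * exp (- \<Lambda>\<^sup>2 / 2) / sqrt 2 \<le> gconv \<gamma> c x"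
proof -
  have "\<gamma> (x - c) * exp (- \<Lambda>\<^sup>2 / 2) / sqrt 2
          = (LINT \<mu>|lborel. \<gamma> (x - c) * (exp (- \<Lambda>\<^sup>2 / 2) / sqrt 2 * normal_density x (1 / sqrt 2) \<mu>))"
    by simp
  also have "\<dots> \<le> (LINT \<mu>|lborel. std_normal_density (x - \<mu>) * \<gamma> (\<mu> - c))"
  proof (rule integral_mono)
    show "integrable lborel (\<lambda>\<mu>. std_normal_density (x - \<mu>) * \<gamma> (\<mu> - c))"
      by (rule integrable_std_normal_density_mult[OF integrable_shift[OF integrable]])
    fix \<mu>
    have "exp (- \<Lambda>\<^sup>2 / 2) / sqrt 2 * normal_density x (1 / sqrt 2) \<mu>
            \<le> std_normal_density (x - \<mu>) * exp (- (\<Lambda> * \<bar>x - \<mu>\<bar>))"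
      using std_normal_density_mult_exp_ge[of \<Lambda> "x - \<mu>"] unfolding normal_density_zero_diff .
    then have "\<gamma> (x - c) * (exp (- \<Lambda>\<^sup>2 / 2) / sqrt 2 * normal_density x (1 / sqrt 2) \<mu>)
            \<le> \<gamma> (x - c) * (std_normal_density (x - \<mu>) * exp (- (\<Lambda> * \<bar>x - \<mu>\<bar>)))"
      by (rule mult_left_mono) (simp add: less_imp_le pos)
    also have "\<dots> = std_normal_density (x - \<mu>) * (\<gamma> (x - c) * exp (- (\<Lambda> * \<bar>(\<mu> - c) - (x - c)\<bar>)))"
      by (simp add: abs_minus_commute)
    also have "\<dots> \<le> std_normal_density (x - \<mu>) * \<gamma> (\<mu> - c)"
      by (intro mult_left_mono mult_exp_le) simp
    finally show "\<gamma> (x - c) * (exp (- \<Lambda>\<^sup>2 / 2) / sqrt 2 * normal_density x (1 / sqrt 2) \<mu>)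
                    \<le> std_normal_density (x - \<mu>) * \<gamma> (\<mu> - c)" .
  qed simp
  finally show ?thesis
    by (simp add: gconv_def)
qed

lemma gconv_pos: "0 < gconv \<gamma> c x"
proof -
  have "0 < \<gamma> (x - c) * exp (- \<Lambda>\<^sup>2 / 2) / sqrt 2"
    using pos by simp
  then show ?thesis
    using gconv_ge by (rule less_le_trans)
qed

lemma abs_deriv_gconv_le: "\<bar>deriv (gconv \<gamma> c) x\<bar> \<le> sqrt (8 * pi) * exp (2 * \<Lambda>\<^sup>2) * \<gamma> (x - c)"
proof -
  define f where "f \<mu> = - (x - \<mu>) * std_normal_density (x - \<mu>) * \<gamma> (\<mu> - c)" for \<mu>
  define k where "k \<mu> = \<gamma> (x - c) * (sqrt (8 * pi) * exp (2 * \<Lambda>\<^sup>2) * normal_density 0 2 (x - \<mu>))" for \<mu>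
  have bound: "\<bar>f \<mu>\<bar> \<le> k \<mu>" for \<mu>
  proof -
    have shift: "\<gamma> (\<mu> - c) \<le> \<gamma> (x - c) * exp (\<Lambda> * \<bar>x - \<mu>\<bar>)"
      using le_mult_exp[of "\<mu> - c" "x - c"] by (simp add: abs_minus_commute)
    have "\<bar>f \<mu>\<bar> = \<bar>x - \<mu>\<bar> * std_normal_density (x - \<mu>) * \<gamma> (\<mu> - c)"
      using pos[of "\<mu> - c"] unfolding f_def abs_mult abs_minus_cancel by simp
    also have "\<dots> \<le> \<bar>x - \<mu>\<bar> * std_normal_density (x - \<mu>) * (\<gamma> (x - c) * exp (\<Lambda> * \<bar>x - \<mu>\<bar>))"
      by (rule mult_left_mono[OF shift]) simp
    also have "\<dots> = \<gamma> (x - c) * (\<bar>x - \<mu>\<bar> * std_normal_density (x - \<mu>) * exp (\<Lambda> * \<bar>x - \<mu>\<bar>))"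
      by (simp add: mult_ac)
    also have "\<dots> \<le> k \<mu>"
      unfolding k_def using pos[of "x - c"]
      by (intro mult_left_mono abs_mult_std_normal_density_mult_exp_le) simp
    finally show ?thesis .
  qed
  have [measurable]: "\<gamma> \<in> borel_measurable borel"
    using borel_measurable_integrable[OF integrable] by simp
  have k_integrable: "integrable lborel k"
    unfolding k_def by (simp add: normal_density_zero_diff)
  have f_integrable: "integrable lborel f"
  proof (rule Bochner_Integration.integrable_bound[OF k_integrable])
    show "f \<in> borel_measurable lborel"
      unfolding f_def by measurable
    show "AE \<mu> in lborel. norm (f \<mu>) \<le> norm (k \<mu>)"
      using bound by (intro AE_I2) (metis abs_ge_self order_trans real_norm_def)
  qed
  have "deriv (gconv \<gamma> c) x = integral\<^sup>L lborel f"
    unfolding f_def by (rule DERIV_imp_deriv[OF gconv_has_real_derivative[OF integrable]])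
  then have "\<bar>deriv (gconv \<gamma> c) x\<bar> \<le> integral\<^sup>L lborel k"
    using integral_abs_bound_integral[OF f_integrable k_integrable bound] by simp
  also have "integral\<^sup>L lborel k = sqrt (8 * pi) * exp (2 * \<Lambda>\<^sup>2) * \<gamma> (x - c)"
    unfolding k_def by (simp add: normal_density_zero_diff)
  finally show ?thesis .
qed

lemma abs_zeta_minus_self_le:
  assumes w: "0 < w" "w \<le> 1"
  shows "\<bar>zeta \<gamma> w c x - x\<bar>
           \<le> 4 * \<Lambda> + 2 * sqrt (ln (1 / w) + \<Lambda> * \<bar>c\<bar>)
             + sqrt 2 * exp (\<Lambda>\<^sup>2 / 2) / \<gamma> 0 + 4 * sqrt pi * exp (5 * \<Lambda>\<^sup>2 / 2)"
proof -
  define G where "G = gconv \<gamma> c x"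
  define K where "K = \<gamma> 0 * exp (- \<Lambda>\<^sup>2 / 2) / sqrt 2"
  have "0 < G"
    unfolding G_def by (rule gconv_pos)
  have "0 < K"
    unfolding K_def using pos by simp
  have \<gamma>_le: "\<gamma> (x - c) \<le> sqrt 2 * exp (\<Lambda>\<^sup>2 / 2) * G"
    using gconv_ge[of x c] by (simp add: G_def exp_minus field_simps)
  have "\<bar>deriv (gconv \<gamma> c) x\<bar> \<le> sqrt (8 * pi) * exp (2 * \<Lambda>\<^sup>2) * (sqrt 2 * exp (\<Lambda>\<^sup>2 / 2) * G)"
    by (rule order_trans[OF abs_deriv_gconv_le mult_left_mono[OF \<gamma>_le]]) simp
  also have "\<dots> = (sqrt (8 * pi) * sqrt 2) * (exp (2 * \<Lambda>\<^sup>2) * exp (\<Lambda>\<^sup>2 / 2)) * G"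
    by (simp add: mult_ac)
  also have "sqrt (8 * pi) * sqrt 2 = sqrt (4\<^sup>2 * pi)"
    by (simp flip: real_sqrt_mult)
  also have "exp (2 * \<Lambda>\<^sup>2) * exp (\<Lambda>\<^sup>2 / 2) = exp (5 * \<Lambda>\<^sup>2 / 2)"
    by (simp flip: exp_add)
  also have "sqrt (4\<^sup>2 * pi) = 4 * sqrt pi"
    by (simp add: real_sqrt_mult)
  finally have G'_le: "\<bar>deriv (gconv \<gamma> c) x\<bar> \<le> 4 * sqrt pi * exp (5 * \<Lambda>\<^sup>2 / 2) * G" .
  have "K * exp (- (\<Lambda> * \<bar>x\<bar> + \<Lambda> * \<bar>c\<bar>)) \<le> \<gamma> (x - c) * exp (- \<Lambda>\<^sup>2 / 2) / sqrt 2"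
  proof -
    have "\<Lambda> * \<bar>x - c\<bar> \<le> \<Lambda> * \<bar>x\<bar> + \<Lambda> * \<bar>c\<bar>"
      using mult_left_mono[OF abs_triangle_ineq4 lipschitz_constant_nonneg] by (simp add: distrib_left)
    then have "\<gamma> 0 * exp (- (\<Lambda> * \<bar>x\<bar> + \<Lambda> * \<bar>c\<bar>)) \<le> \<gamma> 0 * exp (- (\<Lambda> * \<bar>x - c\<bar>))"
      by (intro mult_left_mono) (simp_all add: less_imp_le pos)
    also have "\<dots> \<le> \<gamma> (x - c)"
      using mult_exp_le[of 0 "x - c"] by simp
    finally have "\<gamma> 0 * exp (- (\<Lambda> * \<bar>x\<bar> + \<Lambda> * \<bar>c\<bar>)) \<le> \<gamma> (x - c)" .
    then show ?thesis
      unfolding K_def by (simp add: divide_right_mono mult.commute mult.left_commute)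
  qed
  also have "\<dots> \<le> G"
    unfolding G_def by (rule gconv_ge)
  finally have G_ge: "K * exp (- (\<Lambda> * \<bar>x\<bar> + \<Lambda> * \<bar>c\<bar>)) \<le> G" .
  have "\<bar>zeta \<gamma> w c x - x\<bar> \<le> 4 * \<Lambda> + 2 * sqrt (ln (1 / w) + \<Lambda> * \<bar>c\<bar>) + 1 / K
                                  + 4 * sqrt pi * exp (5 * \<Lambda>\<^sup>2 / 2)"
    unfolding zeta_minus_self_eq[OF integrable w gconv_pos] marg_def
    using mixture_score_le[OF w normal_density_pos abs_mult_std_normal_density_le \<open>0 < G\<close> G_ge G'_le
        \<open>0 < K\<close> _ lipschitz_constant_nonneg]
    by (simp add: G_def lipschitz_constant_nonneg)
  also have "1 / K = sqrt 2 * exp (\<Lambda>\<^sup>2 / 2) / \<gamma> 0"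
    unfolding K_def by (simp add: exp_minus field_simps)
  finally show ?thesis .
qed

lemma abs_zeta_minus_self_le_sqrt:
  assumes w: "0 < w" "w \<le> 1"
  shows "\<bar>zeta \<gamma> w c x - x\<bar>
           \<le> (4 * \<Lambda> + 2 * sqrt (1 + \<Lambda>) + sqrt 2 * exp (\<Lambda>\<^sup>2 / 2) / \<gamma> 0
               + 4 * sqrt pi * exp (5 * \<Lambda>\<^sup>2 / 2)) * (1 + sqrt (\<bar>c\<bar> + ln (1 / w)))"
proof -
  define D where "D = sqrt 2 * exp (\<Lambda>\<^sup>2 / 2) / \<gamma> 0 + 4 * sqrt pi * exp (5 * \<Lambda>\<^sup>2 / 2)"
  define s where "s = sqrt (\<bar>c\<bar> + ln (1 / w))"
  have "0 < D"
    unfolding D_def using pos[of 0] by (simp add: add_pos_pos)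
  have "0 \<le> s" "0 \<le> ln (1 / w)"
    using w by (simp_all add: s_def)
  have "ln (1 / w) + \<Lambda> * \<bar>c\<bar> \<le> (1 + \<Lambda>) * (\<bar>c\<bar> + ln (1 / w))"
    using \<open>0 \<le> ln (1 / w)\<close> lipschitz_constant_nonneg by (simp add: algebra_simps)
  then have "sqrt (ln (1 / w) + \<Lambda> * \<bar>c\<bar>) \<le> sqrt (1 + \<Lambda>) * s"
    unfolding s_def by (simp flip: real_sqrt_mult)
  then have "\<bar>zeta \<gamma> w c x - x\<bar> \<le> 4 * \<Lambda> + D + 2 * sqrt (1 + \<Lambda>) * s"
    using abs_zeta_minus_self_le[OF w, of c x] unfolding D_def by linarith
  also have "\<dots> \<le> (4 * \<Lambda> + 2 * sqrt (1 + \<Lambda>) + D) * (1 + s)"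
    using \<open>0 \<le> s\<close> \<open>0 < D\<close> lipschitz_constant_nonneg by (simp add: algebra_simps mult_right_mono)
  finally show ?thesis
    unfolding s_def D_def by (simp add: add.assoc)
qed

end

theorem mainTheorem9:
  fixes \<gamma>0 :: "real \<Rightarrow> real" and \<Lambda> :: real
  assumes meas: "\<gamma>0 \<in> borel_measurable lborel"
    and pos: "\<And>u. \<gamma>0 u > 0"
    and integ: "integrable lborel \<gamma>0"
    and total: "(LINT u|lborel. \<gamma>0 u) = 1"
    and symm: "\<And>u. \<gamma>0 (- u) = \<gamma>0 u"
    and unimodal_left: "mono_on {..0} \<gamma>0"
    and unimodal_right: "antimono_on {0..} \<gamma>0"
    and \<Lambda>_pos: "\<Lambda> > 0"
    and loglip: "\<And>u v. \<bar>ln (\<gamma>0 u) - ln (\<gamma>0 v)\<bar> \<le> \<Lambda> * \<bar>u - v\<bar>"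
  shows "\<exists>C>0. \<forall>x w c. 0 < w \<and> w \<le> 1 \<longrightarrow>
           \<bar>zeta \<gamma>0 w c x - x\<bar> \<le> C * (1 + sqrt (\<bar>c\<bar> + ln (1 / w)))"
proof -
  interpret log_lipschitz_density \<gamma>0 \<Lambda>
    using pos integ loglip by unfold_locales
  let ?C = "4 * \<Lambda> + 2 * sqrt (1 + \<Lambda>) + sqrt 2 * exp (\<Lambda>\<^sup>2 / 2) / \<gamma>0 0
              + 4 * sqrt pi * exp (5 * \<Lambda>\<^sup>2 / 2)"
  have "0 < ?C"
    using \<Lambda>_pos pos[of 0] by (simp add: add_pos_pos add_pos_nonneg)
  then show ?thesis
    using abs_zeta_minus_self_le_sqrt by blast
qed

end
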